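(* Let $P$ be a prime hyperideal of $R$ and let $I$ be a $P$-primary hyperideal of $R$ such that $(P^2:c)\subseteq I$ for every $c\in P\setminus I$. Then $I$ is a 1-absorbing prime hyperideal of $R$.
   Context: Throughout, $R$ is a commutative multiplicative hyperring ($(R,+)$ abelian group, $\circ$ a commutative associative hyperoperation into nonempty subsets with $a\circ(b+c)\subseteq a\circ b+a\circ c$, $a\circ(-b)=(-a)\circ b=-(a\circ b)$; $A\circ B=\bigcup_{a\in A,b\in B}a\circ b$), with identity $1$ ($a\in a\circ 1$); units are $x$ with $1\in x\circ y$ for some $y$. All hyperideals are $\mathbf{C}$-hyperideals (for any finite product $A=r_1\circ\cdots\circ r_n$, $A\cap I\neq\emptyset\Rightarrow A\subseteq I$). $\sqrt{I}=\{r: r^n\subseteq I\text{ for some }n\}$ (the intersection of prime hyperideals containing $I$). A primary hyperideal is a nonzero proper hyperideal $Q$ with $x\circ y\subseteq Q\Rightarrow x\in Q$ or $y\in\sqrt Q$; it is $P$-primary if $\sqrt Q=P$. $P^2=P\circ P$, and $(J:c)=\{r\in R: r\circ c\subseteq J\}$. A 1-absorbing prime hyperideal is a proper hyperideal $I$ such that for all nonunit $x,y,z$, $x\circ y\circ z\subseteq I$ implies $x\circ y\subseteq I$ or $z\in I$. *)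

theory Defs
  imports Main
begin

text \<open>A commutative multiplicative hyperring: the additive abelian group is the
type itself (class ab_group_add); the hyperoperation is m :: 'a => 'a => 'a set.\<close>

definition hmul :: "('a \<Rightarrow> 'a \<Rightarrow> 'a set) \<Rightarrow> 'a set \<Rightarrow> 'a set \<Rightarrow> 'a set" where
  "hmul m A B = (\<Union>a\<in>A. \<Union>b\<in>B. m a b)"

definition setplus :: "'a::ab_group_add set \<Rightarrow> 'a set \<Rightarrow> 'a set" where
  "setplus A B = {a + b | a b. a \<in> A \<and> b \<in> B}"

definition comm_mult_hyperring :: "('a::ab_group_add \<Rightarrow> 'a \<Rightarrow> 'a set) \<Rightarrow> bool" where
  "comm_mult_hyperring m \<longleftrightarrow>
     (\<forall>a b. m a b \<noteq> {}) \<and>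
     (\<forall>a b. m a b = m b a) \<and>
     (\<forall>a b c. hmul m (m a b) {c} = hmul m {a} (m b c)) \<and>
     (\<forall>a b c. m a (b + c) \<subseteq> setplus (m a b) (m a c)) \<and>
     (\<forall>a b. m a (- b) = uminus ` (m a b) \<and> m (- a) b = uminus ` (m a b))"

definition is_hyperring_identity :: "('a \<Rightarrow> 'a \<Rightarrow> 'a set) \<Rightarrow> 'a \<Rightarrow> bool" where
  "is_hyperring_identity m one \<longleftrightarrow> (\<forall>a. a \<in> m a one)"

definition hunit :: "('a \<Rightarrow> 'a \<Rightarrow> 'a set) \<Rightarrow> 'a \<Rightarrow> 'a \<Rightarrow> bool" where
  "hunit m one x \<longleftrightarrow> (\<exists>y. one \<in> m x y)"

fun hprod :: "('a \<Rightarrow> 'a \<Rightarrow> 'a set) \<Rightarrow> 'a list \<Rightarrow> 'a set" where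
  "hprod m [] = {}"
| "hprod m [r] = {r}"
| "hprod m (r # s # rs) = hmul m {r} (hprod m (s # rs))"

definition hpow :: "('a \<Rightarrow> 'a \<Rightarrow> 'a set) \<Rightarrow> 'a \<Rightarrow> nat \<Rightarrow> 'a set" where
  "hpow m r n = hprod m (replicate n r)"

definition hyperideal :: "('a::ab_group_add \<Rightarrow> 'a \<Rightarrow> 'a set) \<Rightarrow> 'a set \<Rightarrow> bool" where
  "hyperideal m I \<longleftrightarrow> I \<noteq> {} \<and> (\<forall>a\<in>I. \<forall>b\<in>I. a - b \<in> I) \<and>
     (\<forall>a\<in>I. \<forall>r. m r a \<subseteq> I)"

definition C_hyperideal :: "('a::ab_group_add \<Rightarrow> 'a \<Rightarrow> 'a set) \<Rightarrow> 'a set \<Rightarrow> bool" where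
  "C_hyperideal m I \<longleftrightarrow> hyperideal m I \<and>
     (\<forall>rs. rs \<noteq> [] \<longrightarrow> hprod m rs \<inter> I \<noteq> {} \<longrightarrow> hprod m rs \<subseteq> I)"

definition hrad :: "('a \<Rightarrow> 'a \<Rightarrow> 'a set) \<Rightarrow> 'a set \<Rightarrow> 'a set" where
  "hrad m I = {r. \<exists>n\<ge>1. hpow m r n \<subseteq> I}"

definition prime_hyperideal :: "('a::ab_group_add \<Rightarrow> 'a \<Rightarrow> 'a set) \<Rightarrow> 'a set \<Rightarrow> bool" where
  "prime_hyperideal m P \<longleftrightarrow> hyperideal m P \<and> P \<noteq> UNIV \<and>
     (\<forall>x y. m x y \<subseteq> P \<longrightarrow> x \<in> P \<or> y \<in> P)"

definition primary_hyperideal :: "('a::ab_group_add \<Rightarrow> 'a \<Rightarrow> 'a set) \<Rightarrow> 'a set \<Rightarrow> bool" where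
  "primary_hyperideal m Q \<longleftrightarrow> hyperideal m Q \<and> Q \<noteq> {0} \<and> Q \<noteq> UNIV \<and>
     (\<forall>x y. m x y \<subseteq> Q \<longrightarrow> x \<in> Q \<or> y \<in> hrad m Q)"

definition P_primary :: "('a::ab_group_add \<Rightarrow> 'a \<Rightarrow> 'a set) \<Rightarrow> 'a set \<Rightarrow> 'a set \<Rightarrow> bool" where
  "P_primary m P Q \<longleftrightarrow> primary_hyperideal m Q \<and> hrad m Q = P"

definition hcolon :: "('a \<Rightarrow> 'a \<Rightarrow> 'a set) \<Rightarrow> 'a set \<Rightarrow> 'a \<Rightarrow> 'a set" where
  "hcolon m J c = {r. m r c \<subseteq> J}"

definition one_absorbing_prime :: "('a::ab_group_add \<Rightarrow> 'a \<Rightarrow> 'a set) \<Rightarrow> 'a \<Rightarrow> 'a set \<Rightarrow> bool" where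
  "one_absorbing_prime m one I \<longleftrightarrow> hyperideal m I \<and> I \<noteq> UNIV \<and>
     (\<forall>x y z. \<not> hunit m one x \<longrightarrow> \<not> hunit m one y \<longrightarrow> \<not> hunit m one z \<longrightarrow>
        hmul m (m x y) {z} \<subseteq> I \<longrightarrow> m x y \<subseteq> I \<or> z \<in> I)"

end

theory Submission
  imports Defs
begin

text \<open>For \<open>c \<in> P\<close> we have \<open>c \<circ> c \<subseteq> P\<^sup>2\<close>, i.e. \<open>c \<in> (P\<^sup>2 : c)\<close>; so the colon
  hypothesis leaves no room for an element of \<open>P - I\<close>, and \<open>P \<subseteq> I \<subseteq> \<surd>I = P\<close>.
  Thus \<open>I = P\<close> is prime, and a prime hyperideal is 1-absorbing prime: if
  \<open>x \<circ> y \<circ> z \<subseteq> P\<close> with \<open>z \<notin> P\<close>, every \<open>w \<in> x \<circ> y\<close> satisfies \<open>w \<circ> z \<subseteq> P\<close>, hence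
  \<open>w \<in> P\<close>.\<close>

lemma hpow_Suc_0 [simp]: "hpow m r (Suc 0) = {r}"
  by (simp add: hpow_def)

lemma subset_hrad: "I \<subseteq> hrad m I"
proof
  fix r assume "r \<in> I"
  then have "hpow m r 1 \<subseteq> I" by simp
  then show "r \<in> hrad m I" unfolding hrad_def by blast
qed

lemma subset_of_hcolon_square:
  assumes "\<forall>c \<in> P - I. hcolon m (hmul m P P) c \<subseteq> I"
  shows "P \<subseteq> I"
proof
  fix c assume "c \<in> P"
  then have "c \<in> hcolon m (hmul m P P) c"
    unfolding hcolon_def hmul_def by blast
  with assms \<open>c \<in> P\<close> show "c \<in> I" by blast
qed

lemma P_primary_eq_of_hcolon_square:
  assumes "P_primary m P I"
    and "\<forall>c \<in> P - I. hcolon m (hmul m P P) c \<subseteq> I"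
  shows "I = P"
proof
  show "I \<subseteq> P"
    using assms(1) subset_hrad[of I m] unfolding P_primary_def by blast
  show "P \<subseteq> I"
    using subset_of_hcolon_square[OF assms(2)] .
qed

lemma prime_imp_one_absorbing_prime:
  assumes "prime_hyperideal m P"
  shows "one_absorbing_prime m one P"
proof -
  have "m x y \<subseteq> P \<or> z \<in> P" if "hmul m (m x y) {z} \<subseteq> P" for x y z
  proof (cases "z \<in> P")
    case False
    have "w \<in> P" if "w \<in> m x y" for w
    proof -
      have "m w z \<subseteq> P"
        using \<open>hmul m (m x y) {z} \<subseteq> P\<close> \<open>w \<in> m x y\<close> unfolding hmul_def by blast
      with assms False show ?thesis unfolding prime_hyperideal_def by blast
    qed
    then show ?thesis by blast
  qed simp
  with assms show ?thesis
    unfolding one_absorbing_prime_def prime_hyperideal_def by blast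
qed

theorem mainTheorem4:
  fixes m :: "'a::ab_group_add \<Rightarrow> 'a \<Rightarrow> 'a set" and one :: 'a
    and P I :: "'a set"
  assumes "comm_mult_hyperring m"
    and "is_hyperring_identity m one"
    and "\<forall>J. hyperideal m J \<longrightarrow> C_hyperideal m J"
    and "prime_hyperideal m P"
    and "P_primary m P I"
    and "\<forall>c \<in> P - I. hcolon m (hmul m P P) c \<subseteq> I"
  shows "one_absorbing_prime m one I"
proof -
  have "I = P"
    using P_primary_eq_of_hcolon_square[OF assms(5,6)] .
  then show ?thesis
    using prime_imp_one_absorbing_prime[OF assms(4)] by simp
qed

end
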